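(* Let $\mathbb{K}$ be a non-Archimedean valued field and $G$ a compactly generated topological group. Then for every normed $\mathbb{K}[G]$-module $E$, the comparison map $c^2 : H^2_{cb}(G, E) \to H^2_c(G, E)$ is injective.
   Context: A non-Archimedean valued field is a field with an absolute value satisfying the ultrametric inequality. A normed $\mathbb{K}[G]$-module is a $\mathbb{K}$-vector space with an ultrametric norm ($\|x\|=0$ iff $x=0$, $\|x+y\|\le\max$, $\|\alpha x\|=|\alpha|_\mathbb{K}\|x\|$) on which $G$ acts by linear isometries. Bar resolution: $\overline{C}^0(G,E)=\overline{C}^0_b(G,E)=E$, and for $n\ge1$, $\overline{C}^n(G,E)$ is the space of continuous maps $G^n\to E$ and $\overline{C}^n_b(G,E)$ its subspace of bounded ones; coboundary $\delta^0v(g)=g\cdot v-v$ and $\delta^nf(g_1,\dots,g_{n+1})=g_1\cdot f(g_2,\dots,g_{n+1})+\sum_{i=1}^n(-1)^if(g_1,\dots,g_ig_{i+1},\dots,g_{n+1})+(-1)^{n+1}f(g_1,\dots,g_n)$. $H^\bullet_c(G,E)$ and $H^\bullet_{cb}(G,E)$ are the cohomologies of these complexes, and the comparison map $c^\bullet$ is induced by the inclusion $\overline{C}^\bullet_b\subset\overline{C}^\bullet$. *)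

theory Defs
  imports "HOL-Analysis.Analysis" "HOL-Algebra.Generated_Groups"
begin

definition nonarch_absval :: "('k::field \<Rightarrow> real) \<Rightarrow> bool" where
  "nonarch_absval av \<longleftrightarrow>
     (\<forall>x. 0 \<le> av x) \<and> (\<forall>x. av x = 0 \<longleftrightarrow> x = 0) \<and>
     (\<forall>x y. av (x * y) = av x * av y) \<and>
     (\<forall>x y. av (x + y) \<le> max (av x) (av y))"

definition topological_group :: "('g, 'b) monoid_scheme \<Rightarrow> 'g topology \<Rightarrow> bool" where
  "topological_group G T \<longleftrightarrow> group G \<and> topspace T = carrier G \<and>
     continuous_map (prod_topology T T) T (\<lambda>p. fst p \<otimes>\<^bsub>G\<^esub> snd p) \<and>
     continuous_map T T (\<lambda>x. inv\<^bsub>G\<^esub> x)"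

definition compactly_generated :: "('g, 'b) monoid_scheme \<Rightarrow> 'g topology \<Rightarrow> bool" where
  "compactly_generated G T \<longleftrightarrow> (\<exists>K. compactin T K \<and> generate G K = carrier G)"

definition normed_KG_module ::
  "('k::field \<Rightarrow> real) \<Rightarrow> ('g, 'b) monoid_scheme \<Rightarrow> ('k \<Rightarrow> 'e::ab_group_add \<Rightarrow> 'e)
   \<Rightarrow> ('e \<Rightarrow> real) \<Rightarrow> ('g \<Rightarrow> 'e \<Rightarrow> 'e) \<Rightarrow> bool" where
  "normed_KG_module av G sc nm act \<longleftrightarrow>
     vector_space sc \<and>
     (\<forall>x. nm x = 0 \<longleftrightarrow> x = 0) \<and>
     (\<forall>x y. nm (x + y) \<le> max (nm x) (nm y)) \<and>
     (\<forall>a x. nm (sc a x) = av a * nm x) \<and>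
     (\<forall>g\<in>carrier G. \<forall>x y. act g (x + y) = act g x + act g y) \<and>
     (\<forall>g\<in>carrier G. \<forall>a x. act g (sc a x) = sc a (act g x)) \<and>
     (\<forall>g\<in>carrier G. \<forall>x. nm (act g x) = nm x) \<and>
     (\<forall>x. act \<one>\<^bsub>G\<^esub> x = x) \<and>
     (\<forall>g\<in>carrier G. \<forall>h\<in>carrier G. \<forall>x. act (g \<otimes>\<^bsub>G\<^esub> h) x = act g (act h x))"

text \<open>An n-cochain is a map on G^n, represented as a function on
  PiE {..<n} (\<lambda>_. carrier G) (extended by 0 outside). G^0 is a point, so
  0-cochains are identified with elements of E.\<close>

definition norm_topology :: "('e::ab_group_add \<Rightarrow> real) \<Rightarrow> 'e topology" where
  "norm_topology nm = Metric_space.mtopology UNIV (\<lambda>x y. nm (x - y))"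

definition cochains ::
  "('g, 'b) monoid_scheme \<Rightarrow> 'g topology \<Rightarrow> ('e::ab_group_add \<Rightarrow> real) \<Rightarrow> nat
   \<Rightarrow> ((nat \<Rightarrow> 'g) \<Rightarrow> 'e) set" where
  "cochains G T nm n = {f.
     continuous_map (product_topology (\<lambda>_. T) {..<n}) (norm_topology nm) f \<and>
     (\<forall>x. x \<notin> PiE {..<n} (\<lambda>_. carrier G) \<longrightarrow> f x = 0)}"

definition bounded_cochains ::
  "('g, 'b) monoid_scheme \<Rightarrow> 'g topology \<Rightarrow> ('e::ab_group_add \<Rightarrow> real) \<Rightarrow> nat
   \<Rightarrow> ((nat \<Rightarrow> 'g) \<Rightarrow> 'e) set" where
  "bounded_cochains G T nm n = {f \<in> cochains G T nm n.
     \<exists>M. \<forall>x\<in>PiE {..<n} (\<lambda>_. carrier G). nm (f x) \<le> M}"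

definition sgnv :: "nat \<Rightarrow> 'e::ab_group_add \<Rightarrow> 'e" where
  "sgnv i v = (if even i then v else - v)"

text \<open>The coboundary delta^n, with 0-indexed arguments x 0, ..., x n standing for g_1, ..., g_(n+1).\<close>

definition coboundary ::
  "('g, 'b) monoid_scheme \<Rightarrow> ('g \<Rightarrow> 'e::ab_group_add \<Rightarrow> 'e) \<Rightarrow> nat
   \<Rightarrow> ((nat \<Rightarrow> 'g) \<Rightarrow> 'e) \<Rightarrow> ((nat \<Rightarrow> 'g) \<Rightarrow> 'e)" where
  "coboundary G act n f = (\<lambda>x.
     if x \<in> PiE {..<Suc n} (\<lambda>_. carrier G) then
       act (x 0) (f (restrict (\<lambda>j. x (Suc j)) {..<n}))
       + (\<Sum>i\<in>{1..n}. sgnv i (f (restrict (\<lambda>j. if j < i - 1 then x j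
                                      else if j = i - 1 then x (i - 1) \<otimes>\<^bsub>G\<^esub> x i
                                      else x (Suc j)) {..<n})))
       + sgnv (Suc n) (f (restrict x {..<n}))
     else 0)"

definition cocycles where
  "cocycles G act CC n = {f \<in> CC n. coboundary G act n f = (\<lambda>_. 0)}"

definition coboundaries where
  "coboundaries G act CC n = (case n of 0 \<Rightarrow> {\<lambda>_. 0} | Suc m \<Rightarrow> coboundary G act m ` CC m)"

definition cohomology where
  "cohomology G act CC n = cocycles G act CC n //
     {(f, g). f \<in> cocycles G act CC n \<and> g \<in> cocycles G act CC n \<and> (\<lambda>x. f x - g x) \<in> coboundaries G act CC n}"

definition Hc where
  "Hc G T nm act n = cohomology G act (cochains G T nm) n"

definition Hcb where
  "Hcb G T nm act n = cohomology G act (bounded_cochains G T nm) n"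

text \<open>Comparison map c^n : H^n_cb \<rightarrow> H^n_c induced by inclusion: a class is sent to the
  class (in H^n_c) of any of its representatives.\<close>

definition comparison_map where
  "comparison_map G T nm act n X =
     {g \<in> cocycles G act (cochains G T nm) n.
        \<exists>f\<in>X. (\<lambda>x. f x - g x) \<in> coboundaries G act (cochains G T nm) n}"

end

theory Submission
  imports Defs
begin

(* If two bounded 2-cocycles differ by the coboundary of a continuous 1-cochain h, then h is a
  quasi-cocycle: |g.h(k) - h(gk) + h(g)| <= D. As G acts by isometries, the ultrametric
  inequality gives |h(gk)| <= max(|h(g)|, |h(k)|, D) with no additive loss, so along words in a
  compact generating set K the values of h never exceed max(D, sup_K |h|), which is finite by
  continuity. Hence h is bounded and the two cocycles are already cohomologous as bounded
  cocycles. *)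

lemma nonarch_absval_minus_one:
  assumes "nonarch_absval av"
  shows "av (-1) = 1"
proof -
  have mult: "\<And>x y. av (x * y) = av x * av y" and nonneg: "\<And>x. 0 \<le> av x"
    and eq_0: "\<And>x. av x = 0 \<longleftrightarrow> x = 0"
    using assms unfolding nonarch_absval_def by auto
  have "av 1 = av 1 * av 1" using mult[of 1 1] by simp
  then have one: "av 1 = 1" using eq_0[of 1] by (metis mult_cancel_left1 one_neq_zero)
  have "av (-1) ^ 2 = 1" using mult[of "-1" "-1"] one by (simp add: power2_eq_square)
  then show ?thesis using nonneg[of "-1"] by (simp add: power2_eq_1_iff)
qed

lemma bounded_cochains_subset: "bounded_cochains G T nm n \<subseteq> cochains G T nm n"
  by (auto simp: bounded_cochains_def)

locale ultrametric_norm =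
  fixes nm :: "'e::ab_group_add \<Rightarrow> real"
  assumes nm_eq_0_iff: "nm x = 0 \<longleftrightarrow> x = 0"
    and nm_add_le_max: "nm (x + y) \<le> max (nm x) (nm y)"
    and nm_minus: "nm (- x) = nm x"
begin

lemma nm_zero: "nm 0 = 0"
  by (simp add: nm_eq_0_iff)

lemma nm_nonneg: "0 \<le> nm x"
  using nm_add_le_max[of x "- x"] by (simp add: nm_zero nm_minus)

lemma nm_diff_le_max: "nm (x - y) \<le> max (nm x) (nm y)"
  using nm_add_le_max[of x "- y"] by (simp add: nm_minus)

lemma nm_add_diff_le_max: "nm (x + y - z) \<le> max (nm x) (max (nm y) (nm z))"
  using nm_diff_le_max[of "x + y" z] nm_add_le_max[of x y] by linarith

lemma nm_commute: "nm (x - y) = nm (y - x)"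
  using nm_minus[of "x - y"] by simp

sublocale M: Metric_space UNIV "\<lambda>x y. nm (x - y)"
proof
  fix x y z :: 'e
  show "0 \<le> nm (x - y)" by (rule nm_nonneg)
  show "nm (x - y) = nm (y - x)" by (rule nm_commute)
  show "nm (x - y) = 0 \<longleftrightarrow> x = y" by (simp add: nm_eq_0_iff)
  have "nm ((x - y) + (y - z)) \<le> max (nm (x - y)) (nm (y - z))" by (rule nm_add_le_max)
  then show "nm (x - z) \<le> nm (x - y) + nm (y - z)"
    using nm_nonneg[of "x - y"] nm_nonneg[of "y - z"] by simp
qed

lemma norm_topology_eq: "norm_topology nm = M.mtopology"
  by (simp add: norm_topology_def)

lemma continuous_map_norm_topology_diff:
  assumes f: "continuous_map X (norm_topology nm) f"
    and g: "continuous_map X (norm_topology nm) g"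
  shows "continuous_map X (norm_topology nm) (\<lambda>x. f x - g x)"
  unfolding norm_topology_eq M.continuous_map_to_metric
proof (intro ballI allI impI)
  fix x and e :: real
  assume x: "x \<in> topspace X" and e: "0 < e"
  obtain U where U: "openin X U" "x \<in> U" "\<forall>y\<in>U. f y \<in> M.mball (f x) e"
    using f x e unfolding norm_topology_eq M.continuous_map_to_metric by blast
  obtain V where V: "openin X V" "x \<in> V" "\<forall>y\<in>V. g y \<in> M.mball (g x) e"
    using g x e unfolding norm_topology_eq M.continuous_map_to_metric by blast
  have "f y - g y \<in> M.mball (f x - g x) e" if "y \<in> U \<inter> V" for y
  proof -
    have "nm ((f x - g x) - (f y - g y)) = nm ((f x - f y) - (g x - g y))"
      by (simp add: algebra_simps)
    also have "\<dots> \<le> max (nm (f x - f y)) (nm (g x - g y))"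
      by (rule nm_diff_le_max)
    also have "\<dots> < e"
      using U(3) V(3) that by auto
    finally show ?thesis by simp
  qed
  moreover have "openin X (U \<inter> V)" "x \<in> U \<inter> V"
    using U(1,2) V(1,2) by auto
  ultimately show "\<exists>W. openin X W \<and> x \<in> W \<and> (\<forall>y\<in>W. f y - g y \<in> M.mball (f x - g x) e)"
    by blast
qed

lemma bounded_on_compactin:
  assumes "continuous_map X (norm_topology nm) f" and "compactin X K"
  obtains B where "\<And>k. k \<in> K \<Longrightarrow> nm (f k) \<le> B"
proof -
  have "compactin M.mtopology (f ` K)"
    using image_compactin[OF assms(2,1)] by (simp add: norm_topology_eq)
  then obtain c r where cr: "f ` K \<subseteq> M.mcball c r"
    using M.compactin_imp_mbounded unfolding M.mbounded_def by blast
  have "nm (f k) \<le> max (nm c) r" if "k \<in> K" for k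
  proof -
    have "nm (c - f k) \<le> r" using cr that by auto
    then show ?thesis using nm_diff_le_max[of c "c - f k"] by simp
  qed
  then show thesis by (rule that)
qed

lemma cochains_diff:
  assumes "a \<in> cochains G T nm n" and "b \<in> cochains G T nm n"
  shows "(\<lambda>x. a x - b x) \<in> cochains G T nm n"
  using assms continuous_map_norm_topology_diff unfolding cochains_def by auto

lemma bounded_cochains_diff:
  assumes a: "a \<in> bounded_cochains G T nm n" and b: "b \<in> bounded_cochains G T nm n"
  shows "(\<lambda>x. a x - b x) \<in> bounded_cochains G T nm n"
proof -
  obtain A where A: "\<And>x. x \<in> PiE {..<n} (\<lambda>_. carrier G) \<Longrightarrow> nm (a x) \<le> A"
    using a unfolding bounded_cochains_def by blast
  obtain B where B: "\<And>x. x \<in> PiE {..<n} (\<lambda>_. carrier G) \<Longrightarrow> nm (b x) \<le> B"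
    using b unfolding bounded_cochains_def by blast
  have "nm (a x - b x) \<le> max A B" if "x \<in> PiE {..<n} (\<lambda>_. carrier G)" for x
    using nm_diff_le_max[of "a x" "b x"] A[OF that] B[OF that] by linarith
  moreover have "(\<lambda>x. a x - b x) \<in> cochains G T nm n"
    using a b by (intro cochains_diff) (auto simp: bounded_cochains_def)
  ultimately show ?thesis
    unfolding bounded_cochains_def by blast
qed

lemma zero_in_bounded_cochains: "(\<lambda>_. 0) \<in> bounded_cochains G T nm n"
  unfolding bounded_cochains_def cochains_def norm_topology_eq by (auto simp: nm_zero)

end

lemma normed_KG_module_ultrametric_norm:
  assumes "nonarch_absval av" and "normed_KG_module av G sc nm act"
  shows "ultrametric_norm nm"
proof
  fix x y
  show "nm x = 0 \<longleftrightarrow> x = 0" and "nm (x + y) \<le> max (nm x) (nm y)"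
    using assms(2) unfolding normed_KG_module_def by auto
  interpret module sc
    using assms(2) by (simp add: normed_KG_module_def module_iff_vector_space)
  have "nm (sc (-1) x) = av (-1) * nm x"
    using assms(2) unfolding normed_KG_module_def by blast
  then show "nm (- x) = nm x"
    using nonarch_absval_minus_one[OF assms(1)] by simp
qed

lemma sgnv_diff: "sgnv i (u - v) = sgnv i u - sgnv i (v :: 'a::ab_group_add)"
  by (simp add: sgnv_def)

lemma coboundary_diff:
  assumes "\<And>g. g \<in> carrier G \<Longrightarrow> Modules.additive (act g)"
  shows "coboundary G act n (\<lambda>x. a x - b x) = (\<lambda>x. coboundary G act n a x - coboundary G act n b x)"
proof
  fix x
  show "coboundary G act n (\<lambda>x. a x - b x) x = coboundary G act n a x - coboundary G act n b x"
  proof (cases "x \<in> PiE {..<Suc n} (\<lambda>_. carrier G)")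
    case True
    then have "Modules.additive (act (x 0))" using assms by auto
    then show ?thesis
      using True by (simp add: coboundary_def Modules.additive.diff sgnv_diff sum_subtractf)
  qed (simp add: coboundary_def)
qed

lemma coboundary_zero:
  assumes "\<And>g. g \<in> carrier G \<Longrightarrow> Modules.additive (act g)"
  shows "coboundary G act n (\<lambda>_. 0) = (\<lambda>_. 0)"
  using coboundary_diff[OF assms, where n = n and a = "\<lambda>_. 0" and b = "\<lambda>_. 0"] by simp

lemma coboundary_1_apply:
  assumes "a \<in> carrier G" and "b \<in> carrier G"
  shows "coboundary G act 1 h (\<lambda>j\<in>{..<2}. if j = 0 then a else b)
    = act a (h (\<lambda>_\<in>{..<1}. b)) - h (\<lambda>_\<in>{..<1}. a \<otimes>\<^bsub>G\<^esub> b) + h (\<lambda>_\<in>{..<1}. a)"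
proof -
  let ?x = "\<lambda>j\<in>{..<2::nat}. if j = 0 then a else b"
  have "?x \<in> PiE {..<Suc 1} (\<lambda>_. carrier G)"
    using assms by (auto simp: PiE_iff)
  then show ?thesis
    by (simp add: coboundary_def sgnv_def cong: restrict_cong)
qed

definition cohomologous where
  "cohomologous G act CC n = {(f, g). f \<in> cocycles G act CC n \<and> g \<in> cocycles G act CC n \<and>
     (\<lambda>x. f x - g x) \<in> coboundaries G act CC n}"

lemma cohomology_eq_quotient:
  "cohomology G act CC n = cocycles G act CC n // cohomologous G act CC n"
  by (simp add: cohomology_def cohomologous_def)

locale cochain_subgroups =
  fixes G :: "('g, 'b) monoid_scheme" and act :: "'g \<Rightarrow> 'e::ab_group_add \<Rightarrow> 'e"
    and CC :: "nat \<Rightarrow> ((nat \<Rightarrow> 'g) \<Rightarrow> 'e) set"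
  assumes additive_act: "g \<in> carrier G \<Longrightarrow> Modules.additive (act g)"
    and zero_mem: "(\<lambda>_. 0) \<in> CC n"
    and diff_mem: "a \<in> CC n \<Longrightarrow> b \<in> CC n \<Longrightarrow> (\<lambda>x. a x - b x) \<in> CC n"
begin

lemma zero_in_coboundaries: "(\<lambda>_. 0) \<in> coboundaries G act CC n"
proof (cases n)
  case (Suc m)
  have "(\<lambda>_. 0) = coboundary G act m (\<lambda>_. 0)"
    by (simp add: coboundary_zero[OF additive_act])
  then show ?thesis
    using Suc zero_mem by (simp add: coboundaries_def)
qed (simp add: coboundaries_def)

lemma coboundaries_diff:
  assumes "u \<in> coboundaries G act CC n" and "v \<in> coboundaries G act CC n"
  shows "(\<lambda>x. u x - v x) \<in> coboundaries G act CC n"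
proof (cases n)
  case (Suc m)
  then obtain a b where "a \<in> CC m" "b \<in> CC m" "u = coboundary G act m a" "v = coboundary G act m b"
    using assms by (auto simp: coboundaries_def)
  then have "(\<lambda>x. u x - v x) = coboundary G act m (\<lambda>x. a x - b x)"
       and "(\<lambda>x. a x - b x) \<in> CC m"
    by (simp_all add: coboundary_diff[OF additive_act] diff_mem)
  then show ?thesis
    using Suc by (simp add: coboundaries_def)
qed (use assms in \<open>simp add: coboundaries_def\<close>)

lemma coboundaries_minus:
  assumes "v \<in> coboundaries G act CC n"
  shows "(\<lambda>x. - v x) \<in> coboundaries G act CC n"
  using coboundaries_diff[OF zero_in_coboundaries assms] by simp

lemma coboundaries_add:
  assumes "u \<in> coboundaries G act CC n" and "v \<in> coboundaries G act CC n"
  shows "(\<lambda>x. u x + v x) \<in> coboundaries G act CC n"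
  using coboundaries_diff[OF assms(1) coboundaries_minus[OF assms(2)]] by simp

lemma equiv_cohomologous: "equiv (cocycles G act CC n) (cohomologous G act CC n)"
proof (rule equivI)
  show "refl_on (cocycles G act CC n) (cohomologous G act CC n)"
    using zero_in_coboundaries by (auto simp: refl_on_def cohomologous_def)
  show "cohomologous G act CC n \<subseteq> cocycles G act CC n \<times> cocycles G act CC n"
    by (auto simp: cohomologous_def)
  show "sym (cohomologous G act CC n)"
  proof (rule symI)
    fix f g
    assume "(f, g) \<in> cohomologous G act CC n"
    then show "(g, f) \<in> cohomologous G act CC n"
      using coboundaries_minus[of "\<lambda>x. f x - g x"] by (simp add: cohomologous_def)
  qed
  show "trans (cohomologous G act CC n)"
  proof (rule transI)
    fix f g k
    assume "(f, g) \<in> cohomologous G act CC n" and "(g, k) \<in> cohomologous G act CC n"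
    then show "(f, k) \<in> cohomologous G act CC n"
      using coboundaries_add[of "\<lambda>x. f x - g x" n "\<lambda>x. g x - k x"]
      by (simp add: cohomologous_def)
  qed
qed

end

context ultrametric_norm
begin

lemma cochain_subgroups_bounded_cochains:
  assumes "\<And>g. g \<in> carrier G \<Longrightarrow> Modules.additive (act g)"
  shows "cochain_subgroups G act (bounded_cochains G T nm)"
  using assms zero_in_bounded_cochains bounded_cochains_diff by (rule cochain_subgroups.intro)

lemma cochain_subgroups_cochains:
  assumes "\<And>g. g \<in> carrier G \<Longrightarrow> Modules.additive (act g)"
  shows "cochain_subgroups G act (cochains G T nm)"
proof (rule cochain_subgroups.intro)
  show "(\<lambda>_. 0) \<in> cochains G T nm n" for n
    using zero_in_bounded_cochains bounded_cochains_subset by blast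
qed (use assms cochains_diff in auto)

lemma inj_on_comparison_map:
  assumes additive: "\<And>g. g \<in> carrier G \<Longrightarrow> Modules.additive (act g)"
    and bounded_primitive: "\<And>h. h \<in> cochains G T nm n \<Longrightarrow>
      coboundary G act n h \<in> bounded_cochains G T nm (Suc n) \<Longrightarrow>
      coboundary G act n h \<in> coboundaries G act (bounded_cochains G T nm) (Suc n)"
  shows "inj_on (comparison_map G T nm act (Suc n)) (Hcb G T nm act (Suc n))"
proof (rule inj_onI)
  interpret C: cochain_subgroups G act "cochains G T nm"
    using additive by (rule cochain_subgroups_cochains)
  interpret B: cochain_subgroups G act "bounded_cochains G T nm"
    using additive by (rule cochain_subgroups_bounded_cochains)
  let ?Z = "cocycles G act (bounded_cochains G T nm) (Suc n)"
  let ?R = "cohomologous G act (bounded_cochains G T nm) (Suc n)"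
  have equiv: "equiv ?Z ?R" by (rule B.equiv_cohomologous)
  fix X Y
  assume "X \<in> Hcb G T nm act (Suc n)" and "Y \<in> Hcb G T nm act (Suc n)"
  then have X: "X \<in> ?Z // ?R" and Y: "Y \<in> ?Z // ?R"
    by (simp_all add: Hcb_def cohomology_eq_quotient)
  assume images_eq: "comparison_map G T nm act (Suc n) X = comparison_map G T nm act (Suc n) Y"
  obtain f0 where f0: "f0 \<in> ?Z" "X = ?R `` {f0}"
    using X by (rule quotientE)
  have "f0 \<in> X" using equiv_class_self[OF equiv f0(1)] f0(2) by simp
  moreover have "f0 \<in> cocycles G act (cochains G T nm) (Suc n)"
    using f0(1) bounded_cochains_subset[of G T nm "Suc n"] by (auto simp: cocycles_def)
  ultimately have "f0 \<in> comparison_map G T nm act (Suc n) X"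
    using C.zero_in_coboundaries by (auto simp: comparison_map_def intro!: bexI[of _ f0])
  then obtain f1 where "f1 \<in> Y"
    and "(\<lambda>x. f1 x - f0 x) \<in> coboundaries G act (cochains G T nm) (Suc n)"
    using images_eq by (auto simp: comparison_map_def)
  then obtain h where "f1 \<in> Y" "h \<in> cochains G T nm n"
    and h: "(\<lambda>x. f1 x - f0 x) = coboundary G act n h"
    by (auto simp: coboundaries_def)
  have "f1 \<in> ?Z" using \<open>f1 \<in> Y\<close> in_quotient_imp_subset[OF equiv Y] by blast
  then have "(\<lambda>x. f1 x - f0 x) \<in> bounded_cochains G T nm (Suc n)"
    using f0(1) by (auto simp: cocycles_def intro: bounded_cochains_diff)
  then have "(\<lambda>x. f1 x - f0 x) \<in> coboundaries G act (bounded_cochains G T nm) (Suc n)"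
    unfolding h using bounded_primitive[OF \<open>h \<in> cochains G T nm n\<close>] by simp
  then have "(f1, f0) \<in> ?R"
    using \<open>f1 \<in> ?Z\<close> f0(1) by (simp add: cohomologous_def)
  then show "X = Y"
    using quotient_eq_iff[OF equiv Y X \<open>f1 \<in> Y\<close> \<open>f0 \<in> X\<close>] by simp
qed

lemma bounded_on_generate:
  assumes "group G" and "K \<subseteq> carrier G"
    and isometric: "\<And>g x. g \<in> carrier G \<Longrightarrow> nm (act g x) = nm x"
    and defect: "\<And>a b. a \<in> carrier G \<Longrightarrow> b \<in> carrier G \<Longrightarrow>
      nm (act a (\<phi> b) - \<phi> (a \<otimes>\<^bsub>G\<^esub> b) + \<phi> a) \<le> D"
    and bounded_on_K: "\<And>k. k \<in> K \<Longrightarrow> nm (\<phi> k) \<le> B"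
    and "g \<in> generate G K"
  shows "nm (\<phi> g) \<le> max D B"
proof -
  have one: "\<one>\<^bsub>G\<^esub> \<in> carrier G" "\<one>\<^bsub>G\<^esub> \<otimes>\<^bsub>G\<^esub> \<one>\<^bsub>G\<^esub> = \<one>\<^bsub>G\<^esub>"
    using \<open>group G\<close> by (simp_all add: group.is_monoid)
  have bounded_one: "nm (\<phi> \<one>\<^bsub>G\<^esub>) \<le> D"
    using defect[OF one(1) one(1)] isometric[OF one(1)] one(2) by simp
  from \<open>g \<in> generate G K\<close> show ?thesis
  proof (induction g rule: generate.induct)
    case one
    then show ?case using bounded_one by simp
  next
    case (incl k)
    then show ?case using bounded_on_K by fastforce
  next
    case (inv k)
    then have k: "k \<in> carrier G" "inv\<^bsub>G\<^esub> k \<in> carrier G" "k \<otimes>\<^bsub>G\<^esub> inv\<^bsub>G\<^esub> k = \<one>\<^bsub>G\<^esub>"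
      using \<open>group G\<close> \<open>K \<subseteq> carrier G\<close> by (auto simp: group.r_inv)
    define c where "c = act k (\<phi> (inv\<^bsub>G\<^esub> k)) - \<phi> \<one>\<^bsub>G\<^esub> + \<phi> k"
    have "nm c \<le> D"
      using defect[OF k(1,2)] k(3) by (simp add: c_def)
    have "nm (\<phi> (inv\<^bsub>G\<^esub> k)) = nm (c + \<phi> \<one>\<^bsub>G\<^esub> - \<phi> k)"
      using isometric[OF k(1)] by (simp add: c_def)
    also have "\<dots> \<le> max (nm c) (max (nm (\<phi> \<one>\<^bsub>G\<^esub>)) (nm (\<phi> k)))"
      by (rule nm_add_diff_le_max)
    finally show ?case
      using \<open>nm c \<le> D\<close> bounded_one bounded_on_K[OF inv] by linarith
  next
    case (eng g1 g2)
    then have g: "g1 \<in> carrier G" "g2 \<in> carrier G"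
      using group.generate_in_carrier[OF \<open>group G\<close> \<open>K \<subseteq> carrier G\<close>] by auto
    define c where "c = act g1 (\<phi> g2) - \<phi> (g1 \<otimes>\<^bsub>G\<^esub> g2) + \<phi> g1"
    have "nm (\<phi> (g1 \<otimes>\<^bsub>G\<^esub> g2)) = nm (act g1 (\<phi> g2) + \<phi> g1 - c)"
      by (simp add: c_def)
    also have "\<dots> \<le> max (nm (act g1 (\<phi> g2))) (max (nm (\<phi> g1)) (nm c))"
      by (rule nm_add_diff_le_max)
    finally show ?case
      using defect[OF g] isometric[OF g(1), of "\<phi> g2"] eng.IH unfolding c_def by linarith
  qed
qed

lemma bounded_cochain_of_bounded_coboundary:
  assumes "group G" and "compactly_generated G T"
    and isometric: "\<And>g x. g \<in> carrier G \<Longrightarrow> nm (act g x) = nm x"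
    and h: "h \<in> cochains G T nm 1"
    and "coboundary G act 1 h \<in> bounded_cochains G T nm 2"
  shows "h \<in> bounded_cochains G T nm 1"
proof -
  obtain K where K: "compactin T K" "generate G K = carrier G"
    using \<open>compactly_generated G T\<close> unfolding compactly_generated_def by blast
  have "K \<subseteq> carrier G"
    using generate.incl[of _ K G] K(2) by auto
  define \<phi> where "\<phi> = (\<lambda>k. h (\<lambda>_\<in>{..<1}. k))"
  have "continuous_map T (product_topology (\<lambda>_. T) {..<1}) (\<lambda>k. \<lambda>_\<in>{..<1::nat}. k)"
    by (auto simp: continuous_map_componentwise)
  then have "continuous_map T (norm_topology nm) (h \<circ> (\<lambda>k. \<lambda>_\<in>{..<1::nat}. k))"
    using h by (auto simp: cochains_def intro: continuous_map_compose)
  then obtain B where B: "\<And>k. k \<in> K \<Longrightarrow> nm (\<phi> k) \<le> B"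
    using bounded_on_compactin[OF _ K(1)] by (auto simp: \<phi>_def comp_def)
  obtain D where D: "\<And>x. x \<in> PiE {..<2} (\<lambda>_. carrier G) \<Longrightarrow> nm (coboundary G act 1 h x) \<le> D"
    using assms(5) by (auto simp: bounded_cochains_def)
  have defect: "nm (act a (\<phi> b) - \<phi> (a \<otimes>\<^bsub>G\<^esub> b) + \<phi> a) \<le> D"
    if "a \<in> carrier G" "b \<in> carrier G" for a b
  proof -
    have "(\<lambda>j\<in>{..<2}. if j = 0 then a else b) \<in> PiE {..<2} (\<lambda>_. carrier G)"
      using that by (auto simp: PiE_iff)
    from D[OF this] show ?thesis
      by (simp only: coboundary_1_apply[OF that] \<phi>_def)
  qed
  have "nm (h x) \<le> max D B" if x: "x \<in> PiE {..<1} (\<lambda>_. carrier G)" for x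
  proof -
    have "x = (\<lambda>_\<in>{..<1}. x 0)"
      using x by (auto simp: PiE_iff extensional_def fun_eq_iff)
    moreover have "x 0 \<in> generate G K"
      using x K(2) by auto
    ultimately show ?thesis
      using bounded_on_generate[OF \<open>group G\<close> \<open>K \<subseteq> carrier G\<close> isometric defect B] by (metis \<phi>_def)
  qed
  then show ?thesis
    using h by (auto simp: bounded_cochains_def)
qed

end

theorem corollary8p8:
  fixes av :: "'k::field \<Rightarrow> real"
    and G :: "('g, 'b) monoid_scheme" and T :: "'g topology"
    and sc :: "'k \<Rightarrow> 'e::ab_group_add \<Rightarrow> 'e" and nm :: "'e \<Rightarrow> real"
    and act :: "'g \<Rightarrow> 'e \<Rightarrow> 'e"
  assumes "nonarch_absval av"
    and "topological_group G T"
    and "compactly_generated G T"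
    and "normed_KG_module av G sc nm act"
  shows "inj_on (comparison_map G T nm act 2) (Hcb G T nm act 2)"
proof -
  interpret ultrametric_norm nm
    using assms(1,4) by (rule normed_KG_module_ultrametric_norm)
  have "group G"
    using assms(2) by (simp add: topological_group_def)
  have additive: "\<And>g. g \<in> carrier G \<Longrightarrow> Modules.additive (act g)"
    and isometric: "\<And>g x. g \<in> carrier G \<Longrightarrow> nm (act g x) = nm x"
    using assms(4) by (auto simp: normed_KG_module_def Modules.additive_def)
  have "inj_on (comparison_map G T nm act (Suc 1)) (Hcb G T nm act (Suc 1))"
  proof (rule inj_on_comparison_map[OF additive])
    fix h
    assume "h \<in> cochains G T nm 1" and "coboundary G act 1 h \<in> bounded_cochains G T nm (Suc 1)"
    then have "h \<in> bounded_cochains G T nm 1"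
      using bounded_cochain_of_bounded_coboundary[OF \<open>group G\<close> assms(3) isometric]
      by (simp add: numeral_2_eq_2)
    then show "coboundary G act 1 h \<in> coboundaries G act (bounded_cochains G T nm) (Suc 1)"
      by (simp add: coboundaries_def)
  qed
  then show ?thesis
    by (simp add: numeral_2_eq_2)
qed

end
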